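(* For $0<\varepsilon\le1$ and $z\in\mathbf{C}\setminus\mathbf{R}$ let $S_\varepsilon(z)=\sum_{n\in\mathbf{Z}}\frac{1}{(z+n)^2|z+n|^{2\varepsilon}}$. Fix $y_0>0$. Then there is a constant $C>0$ depending only on $y_0$ such that for all $z$ with $y=\mathrm{Im}(z)$ satisfying $|y|\ge y_0$ and all $0<\varepsilon\le1$, \[|S_\varepsilon(z)|\le C\left(\frac{1}{\Gamma(\varepsilon)|y|^{1+2\varepsilon}}+e^{-2\pi|y|}\right),\] where $\Gamma(s)=\int_0^\infty e^{-t}t^{s-1}dt$. *)

theory Defs
  imports "HOL-Analysis.Analysis"
begin

definition S_eps :: "real \<Rightarrow> complex \<Rightarrow> complex" where
  "S_eps \<epsilon> z = (\<Sum>\<^sub>\<infinity> n::int. 1 / ((z + of_int n)^2 * of_real (cmod (z + of_int n) powr (2 * \<epsilon>))))"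

end

theory Submission
  imports Defs
begin

text \<open>
  Put \<open>Y = \<bar>Im z\<bar>\<close> and \<open>w = z + n\<close>. As \<open>1 - t powr (-2\<epsilon>) \<le> 2\<epsilon> ln t\<close> for
  \<open>t = \<bar>w\<bar> / Y \<ge> 1\<close>, the \<open>n\<close>-th term of \<open>S_eps \<epsilon> z\<close> differs from \<open>Y powr (-2\<epsilon>) / w\<^sup>2\<close>
  by \<open>O(\<epsilon> Y powr (-2\<epsilon> - 1/2) (Y + \<bar>Re w\<bar>) powr (-3/2))\<close>, and these errors sum to
  \<open>O(\<epsilon> Y powr (-1 - 2\<epsilon>))\<close>. The main terms sum to \<open>Y powr (-2\<epsilon>) \<pi>\<^sup>2 / sin\<^sup>2 (\<pi> z)\<close>
  by the reflection formula for the trigamma function, which is \<open>O(exp (-2\<pi>Y))\<close>.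
  Finally \<open>\<epsilon> \<le> 1 / \<Gamma>(\<epsilon>)\<close> for \<open>0 < \<epsilon> \<le> 1\<close>.
\<close>

lemma one_minus_notin_Ints:
  fixes z :: "'a :: ring_1" assumes "z \<notin> \<int>" shows "1 - z \<notin> \<int>"
proof
  assume "1 - z \<in> \<int>"
  hence "1 - (1 - z) \<in> \<int>" by (intro Ints_diff) auto
  thus False using assms by simp
qed

lemma sin_pi_times_neq_0:
  fixes z :: complex assumes "z \<notin> \<int>" shows "sin (of_real pi * z) \<noteq> 0"
  using assms by (auto simp: sin_eq_0)

lemma Digamma_reflection_complex:
  fixes z :: complex assumes z: "z \<notin> \<int>"
  shows "Digamma z - Digamma (1 - z) = - of_real pi * cos (of_real pi * z) / sin (of_real pi * z)"
proof -
  have z': "z \<notin> \<int>\<^sub>\<le>\<^sub>0" "1 - z \<notin> \<int>\<^sub>\<le>\<^sub>0"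
    using z one_minus_notin_Ints[OF z] nonpos_Ints_subset_Ints by blast+
  have s: "sin (of_real pi * z) \<noteq> 0" using z by (rule sin_pi_times_neq_0)
  have "((\<lambda>w. 1 - w) has_field_derivative -1) (at z)" by (auto intro!: derivative_eq_intros)
  from DERIV_chain2[OF has_field_derivative_Gamma[OF z'(2)] this]
  have "((\<lambda>w. Gamma (1 - w)) has_field_derivative Gamma (1 - z) * Digamma (1 - z) * (-1)) (at z)"
    by simp
  from DERIV_mult[OF has_field_derivative_Gamma[OF z'(1)] this]
  have "((\<lambda>w. Gamma w * Gamma (1 - w)) has_field_derivative
          Gamma z * Gamma (1 - z) * (Digamma z - Digamma (1 - z))) (at z)"
    by (simp add: algebra_simps)
  moreover have "((\<lambda>w. Gamma w * Gamma (1 - w)) has_field_derivative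
          (- (of_real pi ^ 2 * cos (of_real pi * z) / sin (of_real pi * z) ^ 2))) (at z)"
    unfolding Gamma_reflection_complex using s
    by (auto intro!: derivative_eq_intros simp: power2_eq_square)
  ultimately have "Gamma z * Gamma (1 - z) * (Digamma z - Digamma (1 - z))
      = - (of_real pi ^ 2 * cos (of_real pi * z) / sin (of_real pi * z) ^ 2)"
    by (rule DERIV_unique)
  moreover have "Gamma z * Gamma (1 - z) \<noteq> 0"
    using s by (simp add: Gamma_reflection_complex)
  ultimately have "Digamma z - Digamma (1 - z)
      = - (of_real pi ^ 2 * cos (of_real pi * z) / sin (of_real pi * z) ^ 2) / (Gamma z * Gamma (1 - z))"
    by (metis nonzero_mult_div_cancel_left)
  thus ?thesis using s by (simp add: Gamma_reflection_complex power2_eq_square)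
qed

lemma Polygamma_1_reflection_complex:
  fixes z :: complex assumes z: "z \<notin> \<int>"
  shows "Polygamma 1 z + Polygamma 1 (1 - z) = of_real pi ^ 2 / sin (of_real pi * z) ^ 2"
proof -
  have z': "z \<notin> \<int>\<^sub>\<le>\<^sub>0" "1 - z \<notin> \<int>\<^sub>\<le>\<^sub>0"
    using z one_minus_notin_Ints[OF z] nonpos_Ints_subset_Ints by blast+
  have s: "sin (of_real pi * z) \<noteq> 0" using z by (rule sin_pi_times_neq_0)
  have "((\<lambda>w. 1 - w) has_field_derivative -1) (at z)" by (auto intro!: derivative_eq_intros)
  from DERIV_chain2[OF has_field_derivative_Polygamma[OF z'(2), of 0 UNIV] this]
  have "((\<lambda>w. Digamma (1 - w)) has_field_derivative Polygamma 1 (1 - z) * (-1)) (at z)"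
    by simp
  from DERIV_diff[OF has_field_derivative_Polygamma[OF z'(1), of 0 UNIV] this]
  have "((\<lambda>w. Digamma w - Digamma (1 - w)) has_field_derivative
          Polygamma 1 z + Polygamma 1 (1 - z)) (at z)"
    by simp
  moreover have "((\<lambda>w. Digamma w - Digamma (1 - w)) has_field_derivative
          of_real pi ^ 2 / sin (of_real pi * z) ^ 2) (at z)"
  proof (rule has_field_derivative_transform_within_open[where S = "- \<int>"])
    show "((\<lambda>w. - of_real pi * cos (of_real pi * w) / sin (of_real pi * w)) has_field_derivative
            of_real pi ^ 2 / sin (of_real pi * z) ^ 2) (at z)"
      using s by (auto intro!: derivative_eq_intros simp: field_simps power2_eq_square)
        (use sin_cos_squared_add[of "z * of_real pi"] in algebra)
  qed (use z Digamma_reflection_complex in \<open>auto simp: open_Compl\<close>)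
  ultimately show ?thesis by (rule DERIV_unique)
qed

lemma summable_norm_inverse_power2_shift:
  fixes z :: complex
  shows "summable (\<lambda>k. norm (1 / (z + of_nat k) ^ 2))"
proof (rule summable_comparison_test_ev)
  show "summable (\<lambda>k. 4 * inverse (real k ^ 2))"
    using inverse_power_summable[of 2, where 'a=real] by (intro summable_mult) simp
  have bound: "norm (1 / (z + of_nat k) ^ 2) \<le> 4 * inverse (real k ^ 2)"
    if k: "2 * norm z \<le> real k" for k
  proof -
    have "real k / 2 \<le> norm (z + of_nat k)"
      using norm_diff_ineq[of "of_nat k" z] k by (simp add: add.commute)
    hence "(real k / 2)^2 \<le> norm (z + of_nat k) ^ 2"
      by (intro power_mono) auto
    moreover have "0 < norm (z + of_nat k)" if "k > 0"
      using \<open>real k / 2 \<le> norm (z + of_nat k)\<close> that by linarith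
    ultimately show ?thesis using k by (cases "k = 0") (auto simp: norm_divide norm_power field_simps)
  qed
  show "eventually (\<lambda>k. norm (norm (1 / (z + of_nat k) ^ 2)) \<le> 4 * inverse (real k ^ 2)) sequentially"
    using eventually_ge_at_top[of "nat \<lceil>2 * norm z\<rceil>"]
    by eventually_elim (auto intro!: bound simp: nat_le_iff ceiling_le_iff)
qed

lemma has_sum_inverse_power2_shift_nat:
  fixes z :: complex assumes "z \<noteq> 0"
  shows "((\<lambda>k. 1 / (z + of_nat k) ^ 2) has_sum Polygamma 1 z) UNIV"
proof (rule norm_summable_imp_has_sum[OF summable_norm_inverse_power2_shift])
  show "(\<lambda>k. 1 / (z + of_nat k) ^ 2) sums Polygamma 1 z"
    using Polygamma_LIMSEQ[OF assms, of 1] by (simp add: inverse_eq_divide power2_eq_square)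
qed

lemma has_sum_inverse_power2_shift_int:
  fixes z :: complex assumes z: "z \<notin> \<int>"
  shows "((\<lambda>n. 1 / (z + of_int n) ^ 2) has_sum of_real pi ^ 2 / sin (of_real pi * z) ^ 2) UNIV"
proof -
  define f where "f n = 1 / (z + of_int n) ^ 2" for n :: int
  have "z \<noteq> 0" "1 - z \<noteq> 0" using z one_minus_notin_Ints[OF z] by auto
  have "(f has_sum Polygamma 1 z) (range int)"
    using has_sum_inverse_power2_shift_nat[OF \<open>z \<noteq> 0\<close>]
    by (subst has_sum_reindex) (auto simp: f_def o_def)
  moreover have "(f has_sum Polygamma 1 (1 - z)) (range (\<lambda>k. - int k - 1))"
  proof -
    have "f (- int k - 1) = 1 / (1 - z + of_nat k) ^ 2" for k
      unfolding f_def by (simp add: power2_eq_square algebra_simps)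
    thus ?thesis using has_sum_inverse_power2_shift_nat[OF \<open>1 - z \<noteq> 0\<close>]
      by (subst has_sum_reindex) (auto simp: inj_def o_def)
  qed
  ultimately have "(f has_sum Polygamma 1 z + Polygamma 1 (1 - z)) (range int \<union> range (\<lambda>k. - int k - 1))"
    by (rule has_sum_Un_disjoint) auto
  also have "range int \<union> range (\<lambda>k. - int k - 1) = UNIV"
  proof -
    have "n \<in> range int \<union> range (\<lambda>k. - int k - 1)" for n
      by (cases n rule: int_cases) (auto intro: image_eqI)
    thus ?thesis by blast
  qed
  finally show ?thesis using Polygamma_1_reflection_complex[OF z] by (simp add: f_def)
qed

lemma sinh_abs_Im_le_norm_sin:
  fixes w :: complex shows "sinh \<bar>Im w\<bar> \<le> norm (sin w)"
proof (rule power2_le_imp_le)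
  have "(sinh \<bar>Im w\<bar>)^2 = (exp (2 * Im w) + inverse (exp (2 * Im w)) - 2) / 4"
    by (cases "Im w \<ge> 0")
       (simp_all add: sinh_def power2_eq_square field_simps exp_minus exp_add[symmetric])
  also have "\<dots> \<le> (norm (sin w))^2"
    unfolding norm_sin_squared by (intro divide_right_mono) auto
  finally show "(sinh \<bar>Im w\<bar>)^2 \<le> (norm (sin w))^2" .
qed simp

lemma norm_pi_sq_div_sin_sq_le:
  fixes z :: complex and y0 :: real
  assumes y0: "0 < y0" "y0 \<le> \<bar>Im z\<bar>"
  shows "norm (of_real pi ^ 2 / sin (of_real pi * z) ^ 2)
           \<le> 4 * pi^2 / (1 - exp (-2 * pi * y0))^2 * exp (-2 * pi * \<bar>Im z\<bar>)"
proof -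
  define b where "b = pi * \<bar>Im z\<bar>"
  define \<kappa> where "\<kappa> = 1 - exp (-2 * pi * y0)"
  have \<kappa>: "0 < \<kappa>" using y0 by (simp add: \<kappa>_def)
  have "exp b * \<kappa> / 2 \<le> exp b * (1 - exp (-2 * b)) / 2"
    using y0 by (auto simp: \<kappa>_def b_def intro!: mult_left_mono divide_right_mono)
  also have "\<dots> = sinh \<bar>Im (of_real pi * z)\<bar>"
    by (simp add: b_def sinh_def abs_mult field_simps exp_minus flip: exp_add)
  also have "\<dots> \<le> norm (sin (of_real pi * z))" by (rule sinh_abs_Im_le_norm_sin)
  finally have sin_ge: "exp b * \<kappa> / 2 \<le> norm (sin (of_real pi * z))" .
  have "0 < exp b * \<kappa> / 2" using \<kappa> by simp
  have "norm (of_real pi ^ 2 / sin (of_real pi * z) ^ 2) = pi^2 / norm (sin (of_real pi * z))^2"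
    by (simp add: norm_divide norm_power)
  also have "\<dots> \<le> pi^2 / (exp b * \<kappa> / 2)^2"
    using sin_ge \<open>0 < exp b * \<kappa> / 2\<close>
    by (intro divide_left_mono power_mono mult_pos_pos zero_less_power) auto
  also have "\<dots> = 4 * pi^2 / \<kappa>^2 * exp (-2 * b)"
  proof -
    have "exp (-2 * b) = inverse (exp b ^ 2)" by (simp add: exp_minus flip: exp_double)
    thus ?thesis using \<kappa> by (simp add: field_simps)
  qed
  finally show ?thesis by (simp add: b_def \<kappa>_def mult_ac)
qed

lemma powr_neg_three_halves_le_telescope:
  fixes v :: real assumes v: "0 < v"
  shows "(v + 1) powr (-3/2) \<le> 2 * v powr (-1/2) - 2 * (v + 1) powr (-1/2)"
proof -
  define a b where "a = sqrt v" and "b = sqrt (v + 1)"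
  have ab: "0 < a" "0 < b" "a \<le> b" "(b - a) * (b + a) = 1"
    using v by (auto simp: a_def b_def algebra_simps)
  have "(v + 1) powr (-3/2) = 1 / b^3"
  proof -
    have "(v + 1) powr (3/2) = (v + 1) powr 1 * (v + 1) powr (1/2)"
      using powr_add[of "v + 1" 1 "1/2"] by simp
    thus ?thesis using v by (simp add: b_def powr_minus_divide powr_half_sqrt power3_eq_cube)
  qed
  moreover have "v powr (-1/2) = 1 / a" "(v + 1) powr (-1/2) = 1 / b"
    using v by (simp_all add: a_def b_def powr_minus_divide powr_half_sqrt)
  moreover have "1 / b^3 \<le> 2 / (a * b * (b + a))"
  proof -
    have "a * (b + a) \<le> b * (2 * b)" using ab by (intro mult_mono) auto
    from mult_left_mono[OF this, of b] have "a * b * (b + a) \<le> 2 * b^3"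
      using ab by (simp add: power3_eq_cube mult_ac)
    hence "2 / (2 * b^3) \<le> 2 / (a * b * (b + a))"
      using ab by (intro divide_left_mono) auto
    thus ?thesis by simp
  qed
  moreover have "2 / (a * b * (b + a)) = 2 / a - 2 / b"
  proof -
    have "b - a = 1 / (b + a)"
      using ab(4) \<open>0 < a\<close> \<open>0 < b\<close> by (simp add: eq_divide_eq)
    have "2 / a - 2 / b = 2 * (b - a) / (a * b)"
      using \<open>0 < a\<close> \<open>0 < b\<close> by (simp add: field_simps)
    also have "\<dots> = 2 / (a * b * (b + a))"
      unfolding \<open>b - a = 1 / (b + a)\<close> by (simp add: mult_ac)
    finally show ?thesis ..
  qed
  ultimately show ?thesis by simp
qed

lemma sum_powr_neg_three_halves_le:
  fixes Y :: real assumes Y: "0 < Y"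
  shows "(\<Sum>k<N. (Y + real k) powr (-3/2)) \<le> Y powr (-3/2) + 2 * Y powr (-1/2)"
proof (cases N)
  case (Suc M)
  have "(\<Sum>k<N. (Y + real k) powr (-3/2)) = Y powr (-3/2) + (\<Sum>k<M. (Y + real k + 1) powr (-3/2))"
    unfolding Suc sum.lessThan_Suc_shift by (simp add: add_ac)
  also have "(\<Sum>k<M. (Y + real k + 1) powr (-3/2))
      \<le> (\<Sum>k<M. 2 * (Y + real k) powr (-1/2) - 2 * (Y + real (Suc k)) powr (-1/2))"
  proof (rule sum_mono)
    fix k show "(Y + real k + 1) powr (-3/2)
        \<le> 2 * (Y + real k) powr (-1/2) - 2 * (Y + real (Suc k)) powr (-1/2)"
      using powr_neg_three_halves_le_telescope[of "Y + real k"] Y by (simp add: add_ac)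
  qed
  also have "\<dots> = 2 * Y powr (-1/2) - 2 * (Y + real M) powr (-1/2)"
    by (subst sum_lessThan_telescope') simp
  also have "\<dots> \<le> 2 * Y powr (-1/2)" by simp
  finally show ?thesis by simp
qed simp

lemma sum_antimono_le_of_inj:
  fixes F :: "real \<Rightarrow> real" and g :: "'a \<Rightarrow> real" and k :: "'a \<Rightarrow> nat"
  assumes "finite A" and "inj_on k A" and k_le: "\<And>n. n \<in> A \<Longrightarrow> real (k n) \<le> g n"
    and nonneg: "\<And>s. 0 \<le> s \<Longrightarrow> 0 \<le> F s"
    and antimono: "\<And>s t. 0 \<le> s \<Longrightarrow> s \<le> t \<Longrightarrow> F t \<le> F s"
    and bound: "\<And>N. (\<Sum>j<N. F (real j)) \<le> B"
  shows "(\<Sum>n\<in>A. F (g n)) \<le> B"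
proof -
  obtain N where N: "k ` A \<subseteq> {..<N}"
    using finite_nat_bounded[of "k ` A"] \<open>finite A\<close> by blast
  have "(\<Sum>n\<in>A. F (g n)) \<le> (\<Sum>n\<in>A. F (real (k n)))"
    by (intro sum_mono antimono k_le) auto
  also have "\<dots> = (\<Sum>j\<in>k ` A. F (real j))"
    using sum.reindex[OF \<open>inj_on k A\<close>, of "\<lambda>j. F (real j)"] by simp
  also have "\<dots> \<le> (\<Sum>j<N. F (real j))"
    using N by (intro sum_mono2) (auto intro: nonneg)
  finally show ?thesis using bound[of N] by linarith
qed

lemma sum_antimono_int_shift_le:
  fixes F :: "real \<Rightarrow> real" and x B :: real and A :: "int set"
  assumes "finite A"
    and nonneg: "\<And>s. 0 \<le> s \<Longrightarrow> 0 \<le> F s"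
    and antimono: "\<And>s t. 0 \<le> s \<Longrightarrow> s \<le> t \<Longrightarrow> F t \<le> F s"
    and bound: "\<And>N. (\<Sum>j<N. F (real j)) \<le> B"
  shows "(\<Sum>n\<in>A. F \<bar>x + of_int n\<bar>) \<le> 2 * B"
proof -
  define n0 where "n0 = \<lceil>-x\<rceil>"
  have n0: "-x \<le> of_int n0" "of_int n0 - 1 < -x" unfolding n0_def by linarith+
  define A1 A2 where "A1 = {n\<in>A. n0 \<le> n}" and "A2 = {n\<in>A. n < n0}"
  have "(\<Sum>n\<in>A. F \<bar>x + of_int n\<bar>) = (\<Sum>n\<in>A1. F \<bar>x + of_int n\<bar>) + (\<Sum>n\<in>A2. F \<bar>x + of_int n\<bar>)"
    using \<open>finite A\<close> unfolding A1_def A2_def by (subst sum.union_disjoint[symmetric]) (auto intro: sum.cong)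
  also have "(\<Sum>n\<in>A1. F \<bar>x + of_int n\<bar>) \<le> B"
    by (rule sum_antimono_le_of_inj[where k = "\<lambda>n. nat (n - n0)", OF _ _ _ nonneg antimono bound])
       (use \<open>finite A\<close> n0 in \<open>auto simp: A1_def inj_on_def\<close>)
  also have "(\<Sum>n\<in>A2. F \<bar>x + of_int n\<bar>) \<le> B"
    by (rule sum_antimono_le_of_inj[where k = "\<lambda>n. nat (n0 - 1 - n)", OF _ _ _ nonneg antimono bound])
       (use \<open>finite A\<close> n0 in \<open>auto simp: A2_def inj_on_def\<close>)
  finally show ?thesis by simp
qed

lemma powr_int_shift_summable_bound:
  fixes x Y :: real assumes "0 < Y"
  shows "(\<lambda>n::int. (Y + \<bar>x + of_int n\<bar>) powr (-3/2)) summable_on UNIV"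
    and "(\<Sum>\<^sub>\<infinity>n::int. (Y + \<bar>x + of_int n\<bar>) powr (-3/2)) \<le> 2 * (Y powr (-3/2) + 2 * Y powr (-1/2))"
proof -
  have finite_sums: "(\<Sum>n\<in>A. (Y + \<bar>x + of_int n\<bar>) powr (-3/2)) \<le> 2 * (Y powr (-3/2) + 2 * Y powr (-1/2))"
    if "finite A" for A
    by (rule sum_antimono_int_shift_le[where F = "\<lambda>s. (Y + s) powr (-3/2)",
          OF that _ _ sum_powr_neg_three_halves_le[OF assms]])
       (use assms in \<open>auto intro: powr_mono2'\<close>)
  show summable: "(\<lambda>n::int. (Y + \<bar>x + of_int n\<bar>) powr (-3/2)) summable_on UNIV"
    by (rule nonneg_bdd_above_summable_on, simp, rule bdd_aboveI2) (use finite_sums in blast)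
  show "(\<Sum>\<^sub>\<infinity>n::int. (Y + \<bar>x + of_int n\<bar>) powr (-3/2)) \<le> 2 * (Y powr (-3/2) + 2 * Y powr (-1/2))"
    by (rule infsum_le_finite_sums[OF summable finite_sums])
qed

lemma one_minus_powr_neg_le:
  fixes t a :: real assumes "0 < t" shows "1 - t powr (-a) \<le> a * ln t"
  using exp_ge_add_one_self[of "- (a * ln t)"] assms by (simp add: powr_def)

lemma ln_ratio_div_square_le:
  fixes Y r :: real assumes "0 < Y" "Y \<le> r"
  shows "ln (r / Y) / r^2 \<le> 2 * Y powr (-1/2) * r powr (-3/2)"
proof -
  have r: "0 < r" using assms by simp
  have "ln (r / Y) \<le> 2 * (r / Y) powr (1/2)"
    using ln_powr_bound[of "r / Y" "1/2"] assms by simp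
  hence "ln (r / Y) / r^2 \<le> 2 * (r / Y) powr (1/2) / r^2"
    by (intro divide_right_mono) auto
  also have "2 * (r / Y) powr (1/2) / r^2 = 2 * Y powr (-1/2) * r powr (-3/2)"
  proof -
    have "r powr (1/2) / r^2 = r powr (1/2) / r powr 2"
      using r powr_realpow[of r 2] by simp
    also have "\<dots> = r powr (-3/2)"
      using powr_diff[of r "1/2" 2, symmetric] by simp
    finally have "r powr (1/2) / r^2 = r powr (-3/2)" .
    moreover have "(r / Y) powr (1/2) / r^2 = Y powr (-1/2) * (r powr (1/2) / r^2)"
      using assms r by (simp add: powr_divide powr_minus_divide)
    ultimately show ?thesis by simp
  qed
  finally show ?thesis by simp
qed

lemma norm_inverse_power2_powr_diff_le:
  fixes w :: complex and e :: real
  assumes w: "Im w \<noteq> 0" and e: "0 < e"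
  shows "norm (1 / (w^2 * of_real (norm w powr (2 * e))) - of_real (\<bar>Im w\<bar> powr (-2 * e)) / w^2)
           \<le> 16 * e * \<bar>Im w\<bar> powr (-2 * e) * \<bar>Im w\<bar> powr (-1/2) * (\<bar>Im w\<bar> + \<bar>Re w\<bar>) powr (-3/2)"
proof -
  define Y r v where "Y = \<bar>Im w\<bar>" and "r = norm w" and "v = \<bar>Im w\<bar> + \<bar>Re w\<bar>"
  have w0: "w \<noteq> 0" using w by auto
  have Y: "0 < Y" "Y \<le> r" using w abs_Im_le_cmod[of w] by (auto simp: Y_def r_def)
  have v: "0 < v" "v \<le> 2 * r"
    using w abs_Im_le_cmod[of w] abs_Re_le_cmod[of w] by (auto simp: v_def r_def)
  have "r powr (-2 * e) \<le> Y powr (-2 * e)" using Y e by (intro powr_mono2') auto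
  have "1 / (w^2 * of_real (r powr (2 * e))) - of_real (Y powr (-2 * e)) / w^2
      = of_real (r powr (-2 * e) - Y powr (-2 * e)) / w^2"
    using Y w0 by (simp add: powr_minus_divide field_simps)
  hence norm_eq: "norm (1 / (w^2 * of_real (r powr (2 * e))) - of_real (Y powr (-2 * e)) / w^2)
      = (Y powr (-2 * e) - r powr (-2 * e)) / r^2"
    using \<open>r powr (-2 * e) \<le> Y powr (-2 * e)\<close>
    by (simp add: norm_divide norm_power r_def del: of_real_diff)
  have "Y powr (-2 * e) - r powr (-2 * e) = Y powr (-2 * e) * (1 - (r / Y) powr (-2 * e))"
    using Y by (simp add: powr_divide algebra_simps)
  also have "\<dots> \<le> Y powr (-2 * e) * (2 * e * ln (r / Y))"
    using Y one_minus_powr_neg_le[of "r / Y" "2 * e"] by (intro mult_left_mono) auto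
  finally have numerator: "Y powr (-2 * e) - r powr (-2 * e) \<le> 2 * e * Y powr (-2 * e) * ln (r / Y)"
    by (simp add: mult_ac)
  have "r powr (-3/2) \<le> (v / 2) powr (-3/2)" using v by (intro powr_mono2') auto
  also have "\<dots> = 2 powr (3/2) * v powr (-3/2)"
    using v by (simp add: powr_divide powr_minus_divide)
  also have "\<dots> \<le> 2 powr 2 * v powr (-3/2)" by (intro mult_right_mono powr_mono) auto
  finally have r_v: "r powr (-3/2) \<le> 4 * v powr (-3/2)" by simp
  have "(Y powr (-2 * e) - r powr (-2 * e)) / r^2 \<le> 2 * e * Y powr (-2 * e) * (ln (r / Y) / r^2)"
    using numerator by (simp add: divide_right_mono)
  also have "\<dots> \<le> 2 * e * Y powr (-2 * e) * (2 * Y powr (-1/2) * r powr (-3/2))"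
    using Y e by (intro mult_left_mono ln_ratio_div_square_le) auto
  also have "\<dots> \<le> 2 * e * Y powr (-2 * e) * (2 * Y powr (-1/2) * (4 * v powr (-3/2)))"
    using e r_v by (intro mult_left_mono) auto
  finally show ?thesis
    using norm_eq by (simp add: Y_def r_def v_def mult_ac)
qed

lemma norm_S_eps_minus_main_term_le:
  fixes z :: complex and e :: real
  assumes z: "Im z \<noteq> 0" and e: "0 < e"
  shows "norm (S_eps e z - of_real (\<bar>Im z\<bar> powr (-2 * e)) * (of_real pi ^ 2 / sin (of_real pi * z) ^ 2))
           \<le> 32 * e * \<bar>Im z\<bar> powr (-2 * e) * (1 / \<bar>Im z\<bar>^2 + 2 / \<bar>Im z\<bar>)"
proof -
  define Y where "Y = \<bar>Im z\<bar>"
  define K where "K = 16 * e * Y powr (-2 * e) * Y powr (-1/2)"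
  define a where "a n = 1 / ((z + of_int n)^2 * of_real (norm (z + of_int n) powr (2 * e)))" for n :: int
  define c where "c n = 1 / (z + of_int n)^2" for n :: int
  define b where "b n = a n - of_real (Y powr (-2 * e)) * c n" for n :: int
  define m where "m n = K * (Y + \<bar>Re z + of_int n\<bar>) powr (-3/2)" for n :: int
  have Y: "0 < Y" using z by (simp add: Y_def)
  have "z \<notin> \<int>" using z by (auto simp: complex_is_Int_iff)
  hence c_sum: "(c has_sum of_real pi ^ 2 / sin (of_real pi * z) ^ 2) UNIV"
    unfolding c_def by (rule has_sum_inverse_power2_shift_int)
  note majorant = powr_int_shift_summable_bound[OF Y, of "Re z"]
  have m_sum: "m summable_on UNIV"
    unfolding m_def by (intro summable_on_cmult_right majorant(1))
  have b_le_m: "norm (b n) \<le> m n" for n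
    using norm_inverse_power2_powr_diff_le[of "z + of_int n" e] z e
    by (simp add: a_def b_def c_def m_def K_def Y_def mult_ac)
  have b_sum: "b summable_on UNIV"
    by (rule abs_summable_summable, rule summable_on_comparison_test[OF m_sum]) (use b_le_m in auto)
  have "(a has_sum of_real (Y powr (-2 * e)) * (of_real pi ^ 2 / sin (of_real pi * z) ^ 2) + infsum b UNIV) UNIV"
    using has_sum_add[OF has_sum_cmult_right[OF c_sum, where c = "of_real (Y powr (-2 * e))"] has_sum_infsum[OF b_sum]]
    by (simp add: b_def)
  hence "S_eps e z - of_real (Y powr (-2 * e)) * (of_real pi ^ 2 / sin (of_real pi * z) ^ 2) = infsum b UNIV"
    unfolding S_eps_def a_def by (simp add: infsumI)
  moreover have "norm (infsum b UNIV) \<le> infsum m UNIV"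
    by (rule norm_infsum_le[OF has_sum_infsum[OF b_sum] has_sum_infsum[OF m_sum] b_le_m])
  moreover have "infsum m UNIV \<le> K * (2 * (Y powr (-3/2) + 2 * Y powr (-1/2)))"
    unfolding m_def infsum_cmult_right'
    using majorant(2) Y e by (intro mult_left_mono) (auto simp: K_def)
  moreover have "K * (2 * (Y powr (-3/2) + 2 * Y powr (-1/2))) = 32 * e * Y powr (-2 * e) * (1 / Y^2 + 2 / Y)"
  proof -
    have "Y powr (-1/2) * Y powr (-3/2) = 1 / Y^2" "Y powr (-1/2) * Y powr (-1/2) = 1 / Y"
      using Y by (simp_all add: powr_add[symmetric] powr_minus_divide powr_realpow)
    thus ?thesis by (simp add: K_def algebra_simps)
  qed
  ultimately show ?thesis unfolding Y_def by simp
qed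

lemma Gamma_real_le_1:
  fixes x :: real assumes "1 \<le> x" "x \<le> 2" shows "Gamma x \<le> 1"
proof -
  have "(ln \<circ> Gamma) ((1 - (x - 1)) *\<^sub>R 1 + (x - 1) *\<^sub>R 2)
          \<le> (1 - (x - 1)) * (ln \<circ> Gamma) 1 + (x - 1) * (ln \<circ> Gamma) (2::real)"
    by (rule convex_onD[OF log_convex_Gamma_real]) (use assms in auto)
  moreover have "Gamma (2::real) = 1" using Gamma_fact[of 1, where 'a=real] by simp
  moreover have "(1 - (x - 1)) *\<^sub>R 1 + (x - 1) *\<^sub>R 2 = x" by (simp add: algebra_simps)
  ultimately have "ln (Gamma x) \<le> 0" by simp
  thus ?thesis using assms by simp
qed

lemma le_inverse_Gamma_real:
  fixes e :: real assumes "0 < e" "e \<le> 1" shows "e \<le> 1 / Gamma e"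
proof -
  have "e * Gamma e = Gamma (e + 1)"
    using assms by (intro Gamma_plus1[symmetric]) (auto dest: nonpos_Ints_nonpos)
  also have "\<dots> \<le> 1" using assms by (intro Gamma_real_le_1) auto
  finally show ?thesis using assms by (simp add: field_simps)
qed

lemma powr_neg_le_max:
  fixes Y y0 a :: real assumes "0 < y0" "y0 \<le> Y" "0 \<le> a" "a \<le> 1"
  shows "Y powr (-2 * a) \<le> max 1 (1 / y0^2)"
proof (cases "1 \<le> Y")
  case True
  hence "Y powr (-2 * a) \<le> 1 powr (-2 * a)" using assms by (intro powr_mono2') auto
  thus ?thesis by simp
next
  case False
  hence "Y powr (-2 * a) \<le> Y powr (-2)" using assms by (intro powr_mono') auto
  also have "\<dots> = 1 / Y^2" using assms by (simp add: powr_minus_divide powr_realpow)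
  also have "\<dots> \<le> 1 / y0^2" using assms by (intro divide_left_mono power_mono) auto
  finally show ?thesis by simp
qed

lemma norm_S_eps_le:
  fixes z :: complex and e y0 :: real
  assumes y0: "0 < y0" "y0 \<le> \<bar>Im z\<bar>" and e: "0 < e" "e \<le> 1"
  shows "norm (S_eps e z)
           \<le> max 1 (1 / y0^2) * (4 * pi^2 / (1 - exp (-2 * pi * y0))^2) * exp (-2 * pi * \<bar>Im z\<bar>)
             + 32 * (1 / y0 + 2) / (Gamma e * \<bar>Im z\<bar> powr (1 + 2 * e))"
proof -
  define Y where "Y = \<bar>Im z\<bar>"
  define main where "main = of_real (Y powr (-2 * e)) * (of_real pi ^ 2 / sin (of_real pi * z) ^ 2)"
  have Y: "0 < Y" "y0 \<le> Y" using y0 by (simp_all add: Y_def)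
  have "norm main \<le> max 1 (1 / y0^2) * (4 * pi^2 / (1 - exp (-2 * pi * y0))^2 * exp (-2 * pi * Y))"
    unfolding main_def norm_mult Y_def
    using powr_neg_le_max[OF y0, of e] norm_pi_sq_div_sin_sq_le[OF y0] e
    by (intro mult_mono) auto
  moreover have "norm (S_eps e z - main) \<le> 32 * (1 / y0 + 2) / (Gamma e * Y powr (1 + 2 * e))"
  proof -
    have "Im z \<noteq> 0" using Y by (simp add: Y_def)
    have "1 / Y^2 \<le> 1 / (y0 * Y)"
      using Y y0 by (intro divide_left_mono) (auto simp: power2_eq_square intro: mult_right_mono)
    hence "1 / Y^2 + 2 / Y \<le> (1 / y0 + 2) / Y" by (simp add: add_divide_distrib)
    hence "32 * e * Y powr (-2 * e) * (1 / Y^2 + 2 / Y) \<le> 32 * e * Y powr (-2 * e) * ((1 / y0 + 2) / Y)"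
      using e by (intro mult_left_mono) auto
    also have "\<dots> = 32 * (1 / y0 + 2) * e / Y powr (1 + 2 * e)"
      using Y y0 by (simp add: powr_add powr_minus_divide field_simps)
    also have "\<dots> \<le> 32 * (1 / y0 + 2) * (1 / Gamma e) / Y powr (1 + 2 * e)"
      using le_inverse_Gamma_real[OF e] y0 Y by (intro divide_right_mono mult_left_mono) auto
    finally show ?thesis
      using norm_S_eps_minus_main_term_le[OF \<open>Im z \<noteq> 0\<close> e(1)] by (simp add: main_def Y_def)
  qed
  ultimately show ?thesis
    using norm_triangle_ineq[of main "S_eps e z - main"] by (simp add: Y_def mult_ac)
qed

theorem lemma1p6:
  fixes y0 :: real
  assumes "y0 > 0"
  shows "\<exists>C>0. \<forall>z::complex. \<forall>\<epsilon>::real.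
           \<bar>Im z\<bar> \<ge> y0 \<longrightarrow> 0 < \<epsilon> \<longrightarrow> \<epsilon> \<le> 1 \<longrightarrow>
           cmod (S_eps \<epsilon> z) \<le> C * (1 / (Gamma \<epsilon> * \<bar>Im z\<bar> powr (1 + 2 * \<epsilon>)) + exp (- 2 * pi * \<bar>Im z\<bar>))"
proof (intro exI conjI allI impI)
  define K1 K2 where "K1 = max 1 (1 / y0^2) * (4 * pi^2 / (1 - exp (-2 * pi * y0))^2)"
    and "K2 = 32 * (1 / y0 + 2)"
  have K: "0 \<le> K1" "0 < K2"
    unfolding K1_def K2_def using assms by (auto intro!: mult_pos_pos add_pos_pos)
  show "0 < K1 + K2" using K by simp
  fix z :: complex and \<epsilon> :: real
  assume "y0 \<le> \<bar>Im z\<bar>" "0 < \<epsilon>" "\<epsilon> \<le> 1"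
  hence "cmod (S_eps \<epsilon> z) \<le> K1 * exp (-2 * pi * \<bar>Im z\<bar>) + K2 * (1 / (Gamma \<epsilon> * \<bar>Im z\<bar> powr (1 + 2 * \<epsilon>)))"
    using norm_S_eps_le[OF assms] by (simp add: K1_def K2_def)
  also have "\<dots> \<le> (K1 + K2) * exp (-2 * pi * \<bar>Im z\<bar>) + (K1 + K2) * (1 / (Gamma \<epsilon> * \<bar>Im z\<bar> powr (1 + 2 * \<epsilon>)))"
    using K \<open>0 < \<epsilon>\<close> by (intro add_mono mult_right_mono) auto
  also have "\<dots> = (K1 + K2) * (1 / (Gamma \<epsilon> * \<bar>Im z\<bar> powr (1 + 2 * \<epsilon>)) + exp (- 2 * pi * \<bar>Im z\<bar>))"
    by (simp add: algebra_simps)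
  finally show "cmod (S_eps \<epsilon> z) \<le> (K1 + K2) * (1 / (Gamma \<epsilon> * \<bar>Im z\<bar> powr (1 + 2 * \<epsilon>)) + exp (- 2 * pi * \<bar>Im z\<bar>))" .
qed

end
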